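(* Fix an integer $d\geq 3$ and $\rho<1$. There exists $\delta=\delta(d,\rho)>0$ such that the following holds for all sufficiently large $n$. Let $G_n$ be a $d$-regular graph on $n$ vertices whose transition matrix has all eigenvalues other than the top eigenvalue $1$ of absolute value at most $\rho$, let $v$ be any vertex of $G_n$, and let $G$ be obtained by adding a new vertex $v'$ and the edge $\{v,v'\}$. Then for simple random walk on $G$ and every vertex $u\neq v'$ of $G$, $$\mathbb{P}_u(\tau_{v'}\geq \delta n)\geq \delta\qquad\text{and}\qquad \mathbb{P}_u(\tau_{v'}\leq n)\geq\delta.$$
   Context: $\tau_{v'}=\min\{t\geq 1:X_t=v'\}$ for simple random walk $(X_t)$ on $G$; $\mathbb{P}_u$ is the law with $X_0=u$. *)

theory Defs
  imports "Jordan_Normal_Form.Char_Poly"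
begin

definition srw_step :: "'a set \<Rightarrow> ('a \<Rightarrow> 'a \<Rightarrow> bool) \<Rightarrow> 'a \<Rightarrow> 'a \<Rightarrow> real" where
  "srw_step V Adj x y = (if Adj x y then 1 / real (card {z \<in> V. Adj x z}) else 0)"

(* srw_avoid V Adj t k x = P_x(X_1 \<noteq> t, ..., X_k \<noteq> t) = P_x(tau_t > k),
   where tau_t = min{s \<ge> 1 : X_s = t}. *)
fun srw_avoid :: "'a set \<Rightarrow> ('a \<Rightarrow> 'a \<Rightarrow> bool) \<Rightarrow> 'a \<Rightarrow> nat \<Rightarrow> 'a \<Rightarrow> real" where
  "srw_avoid V Adj t 0 x = 1"
| "srw_avoid V Adj t (Suc k) x =
     (\<Sum>y\<in>V. srw_step V Adj x y * (if y = t then 0 else srw_avoid V Adj t k y))"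

(* P_x(tau_t \<ge> r) for a real threshold r: tau_t \<ge> r iff tau_t > ceiling r - 1 *)
definition hit_time_ge_prob :: "'a set \<Rightarrow> ('a \<Rightarrow> 'a \<Rightarrow> bool) \<Rightarrow> 'a \<Rightarrow> real \<Rightarrow> 'a \<Rightarrow> real" where
  "hit_time_ge_prob V Adj t r x = srw_avoid V Adj t (nat \<lceil>r\<rceil> - 1) x"

definition hit_time_le_prob :: "'a set \<Rightarrow> ('a \<Rightarrow> 'a \<Rightarrow> bool) \<Rightarrow> 'a \<Rightarrow> nat \<Rightarrow> 'a \<Rightarrow> real" where
  "hit_time_le_prob V Adj t k x = 1 - srw_avoid V Adj t k x"

definition regular_graph :: "nat \<Rightarrow> nat \<Rightarrow> (nat \<Rightarrow> nat \<Rightarrow> bool) \<Rightarrow> bool" where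
  "regular_graph n d E \<longleftrightarrow>
     (\<forall>x y. E x y \<longrightarrow> x < n \<and> y < n) \<and>
     (\<forall>x y. E x y \<longrightarrow> E y x) \<and>
     (\<forall>x. \<not> E x x) \<and>
     (\<forall>x<n. card {y. E x y} = d)"

definition transition_matrix :: "nat \<Rightarrow> nat \<Rightarrow> (nat \<Rightarrow> nat \<Rightarrow> bool) \<Rightarrow> real mat" where
  "transition_matrix n d E = mat n n (\<lambda>(i, j). if E i j then 1 / real d else 0)"

(* all eigenvalues (with multiplicity) other than the top eigenvalue 1 have modulus \<le> rho:
   the characteristic polynomial is (X - 1) * q with every root of q of modulus \<le> rho *)
definition spectral_bound :: "real mat \<Rightarrow> real \<Rightarrow> bool" where
  "spectral_bound P rho \<longleftrightarrow>
     (\<exists>q. char_poly (map_mat complex_of_real P) = [:-1, 1:] * q \<and>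
          (\<forall>z. poly q z = 0 \<longrightarrow> cmod z \<le> rho))"

(* G: add new vertex n (= v') and edge {v, n} *)
definition add_pendant :: "(nat \<Rightarrow> nat \<Rightarrow> bool) \<Rightarrow> nat \<Rightarrow> nat \<Rightarrow> nat \<Rightarrow> nat \<Rightarrow> bool" where
  "add_pendant E v w x y \<longleftrightarrow> E x y \<or> (x = v \<and> y = w) \<or> (x = w \<and> y = v)"

end

theory Submission
  imports Defs "Jordan_Normal_Form.Spectral_Radius" "HOL-Analysis.Convex" "HOL-Real_Asymp.Real_Asymp"
begin

text \<open>
  Let P be the transition kernel of the d-regular graph G_n on {..<n}; the
  graph G adds the pendant vertex n attached to v.  Off the pendant vertex, the walk on G moves
  like the walk on G_n, except that at v it jumps to n with probability 1/(d+1).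

  Deflating the constant eigenvector (char_poly_constant_shift) shows that
     S = P - J/n has all eigenvalues in {0} together with those of P other than 1, so by the
     Jordan normal form bound of the library the entries of S^k grow like r'^k poly(k) for any
     rho < r' (kernel_pow_growth).  As S is symmetric, log-convexity of k |-> |S^k f|^2 turns
     this into the norm bound |S f| <= r |f| for r' < r (symmetric_kernel_contraction), i.e. P
     contracts mean-zero functions (mean_zero_contraction).
  2. Mixing.  Iterating gives |P^j(x, y) - 1/n| <= r^j (pw_mixing); hence within n steps the
     expected number of visits to v lies between 1/2 and W = 1 + 1/(1 - r).
  3. The pendant vertex is not hit early: by Jensen's inequality the probability of avoiding
     it for K <= n steps is at least (d/(d+1))^W (avoid_lower_bound).
  4. It is hit by time n: a renewal decomposition at the killing time bounds the hitting
     probability from below in terms of the visits to v (hit_lower_bound).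
  Both constants depend only on d and r, which yields delta in the final theorem.
\<close>

definition kmat :: "nat \<Rightarrow> (nat \<Rightarrow> nat \<Rightarrow> 'a) \<Rightarrow> 'a mat" where
  "kmat n M = mat n n (\<lambda>(i, j). M i j)"

lemma kmat_carrier [simp]: "kmat n M \<in> carrier_mat n n"
  by (simp add: kmat_def)

lemma kmat_dim [simp]: "dim_row (kmat n M) = n" "dim_col (kmat n M) = n"
  by (simp_all add: kmat_def)

lemma kmat_index [simp]: "i < n \<Longrightarrow> j < n \<Longrightarrow> kmat n M $$ (i, j) = M i j"
  by (simp add: kmat_def)

lemma mat_mult_entry:
  "A \<in> carrier_mat n n \<Longrightarrow> B \<in> carrier_mat n n \<Longrightarrow> i < n \<Longrightarrow> j < n \<Longrightarrow>
   (A * B) $$ (i, j) = (\<Sum>k<n. A $$ (i, k) * B $$ (k, j))"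
  by (simp add: scalar_prod_def atLeast0LessThan)

(* A basis of the form (1,...,1), e_1 - e_0, ..., e_(n-1) - e_0 (as columns) and its inverse.
   Conjugating a matrix with constant row sums into this basis exposes the eigenvector of ones. *)
definition ones_basis :: "nat \<Rightarrow> 'a::field_char_0 mat" where
  "ones_basis n = mat n n (\<lambda>(i, j).
     if j = 0 then 1 else (if i = j then 1 else 0) - (if i = 0 then 1 else 0))"

definition ones_basis_inv :: "nat \<Rightarrow> 'a::field_char_0 mat" where
  "ones_basis_inv n = mat n n (\<lambda>(i, j).
     if i = 0 then 1 / of_nat n else (if i = j then 1 else 0) - 1 / of_nat n)"

lemma ones_basis_carrier [simp]: "ones_basis n \<in> carrier_mat n n"
  by (simp add: ones_basis_def)

lemma ones_basis_inv_carrier [simp]: "ones_basis_inv n \<in> carrier_mat n n"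
  by (simp add: ones_basis_inv_def)

lemma ones_basis_inv_left:
  assumes n: "n > 0"
  shows "ones_basis_inv n * ones_basis n = (1\<^sub>m n :: 'a::field_char_0 mat)"
proof (rule eq_matI)
  fix i j assume "i < dim_row (1\<^sub>m n :: 'a mat)" and "j < dim_col (1\<^sub>m n :: 'a mat)"
  hence i: "i < n" and j: "j < n" by auto
  let ?U = "ones_basis_inv n :: 'a mat" and ?T = "ones_basis n :: 'a mat"
  have nz: "(of_nat n :: 'a) \<noteq> 0" using n by auto
  have "(?U * ?T) $$ (i, j) = (\<Sum>k<n. ?U $$ (i, k) * ?T $$ (k, j))"
    using i j by (simp add: mat_mult_entry)
  also have "\<dots> = (if i = j then 1 else 0)"
  proof (cases "i = 0"; cases "j = 0")
    assume "i = 0" "j = 0"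
    hence "(\<Sum>k<n. ?U $$ (i, k) * ?T $$ (k, j)) = (\<Sum>k<n. 1 / of_nat n)"
      using i j by (intro sum.cong) (auto simp: ones_basis_inv_def ones_basis_def)
    thus ?thesis using nz \<open>i = 0\<close> \<open>j = 0\<close> by simp
  next
    assume "i = 0" "j \<noteq> 0"
    hence "(\<Sum>k<n. ?U $$ (i, k) * ?T $$ (k, j)) =
        (\<Sum>k<n. (if k = j then 1 / of_nat n else 0) - (if k = 0 then 1 / of_nat n else 0))"
      using i j by (intro sum.cong) (auto simp: ones_basis_inv_def ones_basis_def)
    thus ?thesis using \<open>i = 0\<close> \<open>j \<noteq> 0\<close> j n by (simp add: sum_subtractf)
  next
    assume "i \<noteq> 0" "j = 0"
    hence "(\<Sum>k<n. ?U $$ (i, k) * ?T $$ (k, j)) = (\<Sum>k<n. (if i = k then 1 else 0) - 1 / of_nat n)"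
      using i j by (intro sum.cong) (auto simp: ones_basis_inv_def ones_basis_def)
    thus ?thesis using nz \<open>i \<noteq> 0\<close> \<open>j = 0\<close> i by (simp add: sum_subtractf)
  next
    assume "i \<noteq> 0" "j \<noteq> 0"
    hence "(\<Sum>k<n. ?U $$ (i, k) * ?T $$ (k, j)) =
        (\<Sum>k<n. (if k = j then (if i = j then 1 else 0) - 1 / of_nat n else 0)
              - (if k = 0 then - 1 / of_nat n else 0))"
      using i j by (intro sum.cong) (auto simp: ones_basis_inv_def ones_basis_def)
    thus ?thesis using \<open>i \<noteq> 0\<close> \<open>j \<noteq> 0\<close> j n by (simp add: sum_subtractf)
  qed
  finally show "(?U * ?T) $$ (i, j) = 1\<^sub>m n $$ (i, j)" using i j by simp
qed (auto simp: ones_basis_inv_def ones_basis_def)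

lemma ones_basis_inv_right:
  "n > 0 \<Longrightarrow> ones_basis n * ones_basis_inv n = (1\<^sub>m n :: 'a::field_char_0 mat)"
  by (rule mat_mult_left_right_inverse[OF _ _ ones_basis_inv_left]) auto

lemma conj_carrier [simp]:
  "A \<in> carrier_mat n n \<Longrightarrow> ones_basis_inv n * A * ones_basis n \<in> carrier_mat n n"
  by (intro mult_carrier_mat[of _ n n _ n]) auto

lemma conj_entry:
  assumes A: "A \<in> carrier_mat n n" and i: "i < n" and j: "j < n"
  shows "(ones_basis_inv n * A * ones_basis n) $$ (i, j) =
         (\<Sum>k<n. \<Sum>l<n. ones_basis_inv n $$ (i, l) * A $$ (l, k) * ones_basis n $$ (k, j))"
proof -
  let ?U = "ones_basis_inv n" and ?T = "ones_basis n"
  have "(?U * A * ?T) $$ (i, j) = (\<Sum>k<n. (?U * A) $$ (i, k) * ?T $$ (k, j))"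
    using A i j by (intro mat_mult_entry mult_carrier_mat[of _ n n _ n]) auto
  also have "\<dots> = (\<Sum>k<n. \<Sum>l<n. ?U $$ (i, l) * A $$ (l, k) * ?T $$ (k, j))"
    using A i by (intro sum.cong refl)
      (simp add: mat_mult_entry[OF ones_basis_inv_carrier A] sum_distrib_right)
  finally show ?thesis .
qed

lemma ones_basis_inv_row_sum:
  "i < n \<Longrightarrow> (\<Sum>l<n. ones_basis_inv n $$ (i, l)) = (if i = 0 then 1 else (0::'a::field_char_0))"
  by (auto simp: ones_basis_inv_def sum_subtractf)

lemma conj_first_column:
  assumes A: "A \<in> carrier_mat n n" and i: "i < n"
    and rows: "\<And>l. l < n \<Longrightarrow> (\<Sum>k<n. A $$ (l, k)) = s"
  shows "(ones_basis_inv n * A * ones_basis n) $$ (i, 0) = (if i = 0 then s else 0)"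
proof -
  let ?U = "ones_basis_inv n"
  have "(?U * A * ones_basis n) $$ (i, 0) = (\<Sum>l<n. \<Sum>k<n. ?U $$ (i, l) * A $$ (l, k))"
    using i by (subst conj_entry[OF A i], force, subst sum.swap)
      (auto simp: ones_basis_def intro!: sum.cong)
  also have "\<dots> = (\<Sum>l<n. ?U $$ (i, l)) * s"
    by (simp add: sum_distrib_left[symmetric] sum_distrib_right rows)
  finally show ?thesis by (simp add: ones_basis_inv_row_sum[OF i])
qed

lemma conj_shift_invariant:
  assumes A: "A \<in> carrier_mat n n" and B: "B \<in> carrier_mat n n"
    and i: "i < n" and j: "j < n" and i0: "i \<noteq> 0"
    and shift: "\<And>l k. l < n \<Longrightarrow> k < n \<Longrightarrow> B $$ (l, k) = A $$ (l, k) - c"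
  shows "(ones_basis_inv n * B * ones_basis n) $$ (i, j) = (ones_basis_inv n * A * ones_basis n) $$ (i, j)"
proof -
  let ?U = "ones_basis_inv n" and ?T = "ones_basis n"
  have "(?U * B * ?T) $$ (i, j) =
      (\<Sum>k<n. (\<Sum>l<n. ?U $$ (i, l) * A $$ (l, k) * ?T $$ (k, j)) - (\<Sum>l<n. ?U $$ (i, l)) * c * ?T $$ (k, j))"
    unfolding conj_entry[OF B i j]
    by (intro sum.cong refl) (simp add: shift algebra_simps sum_subtractf sum_distrib_right sum_distrib_left)
  also have "\<dots> = (?U * A * ?T) $$ (i, j)"
    using i0 by (simp add: conj_entry[OF A i j] ones_basis_inv_row_sum[OF i])
  finally show ?thesis .
qed

lemma char_poly_first_column:
  fixes M :: "'a::field mat"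
  assumes M: "M \<in> carrier_mat n n" and n: "n > 0"
    and col: "\<And>i. i < n \<Longrightarrow> M $$ (i, 0) = (if i = 0 then s else 0)"
  shows "char_poly M = [:-s, 1:] * char_poly (mat (n - 1) (n - 1) (\<lambda>(i, j). M $$ (Suc i, Suc j)))"
proof -
  obtain A1 A2 A0 A3 where sb: "split_block M 1 1 = (A1, A2, A0, A3)"
    by (cases "split_block M 1 1") auto
  have dims: "dim_row M = 1 + (n - 1)" "dim_col M = 1 + (n - 1)" using M n by auto
  note blocks = split_block[OF sb dims]
  have A1: "A1 = mat 1 1 (\<lambda>_. s)"
    using sb col[of 0] n M unfolding split_block_def Let_def by (auto intro!: eq_matI)
  have A0: "A0 = 0\<^sub>m (n - 1) 1"
    using sb col M n unfolding split_block_def Let_def by (auto intro!: eq_matI)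
  have A3: "A3 = mat (n - 1) (n - 1) (\<lambda>(i, j). M $$ (Suc i, Suc j))"
    using sb M unfolding split_block_def Let_def by (auto intro!: eq_matI)
  have "char_poly M = char_poly (four_block_mat A1 A2 (0\<^sub>m (n - 1) 1) A3)"
    using blocks(5) A0 by simp
  also have "\<dots> = char_poly A1 * char_poly A3"
    using blocks by (intro char_poly_four_block_zeros_col) auto
  also have "char_poly A1 = [:-s, 1:]"
    by (simp add: A1 char_poly_defs det_def sign_def)
  finally show ?thesis unfolding A3 .
qed

lemma similar_conj_ones_basis:
  fixes A :: "'a::field_char_0 mat"
  assumes A: "A \<in> carrier_mat n n" and n: "n > 0"
  shows "similar_mat A (ones_basis_inv n * A * ones_basis n)"
proof (rule similar_matI)
  let ?U = "ones_basis_inv n :: 'a mat" and ?T = "ones_basis n :: 'a mat"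
  show "{A, ?U * A * ?T, ?T, ?U} \<subseteq> carrier_mat n n" using A by auto
  show "?T * ?U = 1\<^sub>m n" and "?U * ?T = 1\<^sub>m n"
    using n by (simp_all add: ones_basis_inv_left ones_basis_inv_right)
  have UA: "?U * A \<in> carrier_mat n n" using A by (rule mult_carrier_mat[OF ones_basis_inv_carrier])
  have TU: "?T * ?U = 1\<^sub>m n" using n by (rule ones_basis_inv_right)
  have "?T * (?U * A * ?T) * ?U = ?T * (?U * A * ?T * ?U)"
    using A by (intro assoc_mult_mat[of _ n n _ n _ n]) auto
  also have "?U * A * ?T * ?U = ?U * A"
    using UA by (simp add: TU assoc_mult_mat[of _ n n _ n _ n] right_mult_one_mat[OF UA])
  also have "?T * (?U * A) = (?T * ?U) * A"
    using A by (intro assoc_mult_mat[symmetric, of _ n n _ n _ n]) auto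
  finally show "A = ?T * (?U * A * ?T) * ?U" using A by (simp add: TU)
qed

lemma char_poly_constant_shift:
  fixes A B :: "'a::field_char_0 mat"
  assumes A: "A \<in> carrier_mat n n" and B: "B \<in> carrier_mat n n" and n: "n > 0"
    and rows: "\<And>i. i < n \<Longrightarrow> (\<Sum>k<n. A $$ (i, k)) = s"
    and shift: "\<And>i j. i < n \<Longrightarrow> j < n \<Longrightarrow> B $$ (i, j) = A $$ (i, j) - c"
  shows "\<exists>q. char_poly A = [:-s, 1:] * q \<and> char_poly B = [:-(s - of_nat n * c), 1:] * q"
proof -
  let ?U = "ones_basis_inv n :: 'a mat" and ?T = "ones_basis n :: 'a mat"
  let ?tail = "\<lambda>M. mat (n - 1) (n - 1) (\<lambda>(i, j). (?U * M * ?T) $$ (Suc i, Suc j))"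
  have rows_B: "(\<Sum>k<n. B $$ (i, k)) = s - of_nat n * c" if "i < n" for i
    using that by (simp add: shift sum_subtractf rows)
  have "char_poly A = [:-s, 1:] * char_poly (?tail A)"
    unfolding char_poly_similar[OF similar_conj_ones_basis[OF A n]]
    by (rule char_poly_first_column[OF conj_carrier[OF A] n conj_first_column[OF A _ rows]])
  moreover have "char_poly B = [:-(s - of_nat n * c), 1:] * char_poly (?tail B)"
    unfolding char_poly_similar[OF similar_conj_ones_basis[OF B n]]
    by (rule char_poly_first_column[OF conj_carrier[OF B] n conj_first_column[OF B _ rows_B]])
  moreover have "?tail B = ?tail A"
    by (rule eq_matI) (auto intro!: conj_shift_invariant[OF A B _ _ _ shift])
  ultimately show ?thesis by auto
qed

fun kernel_pow :: "(nat \<Rightarrow> nat \<Rightarrow> 'a::comm_semiring_1) \<Rightarrow> nat \<Rightarrow> nat \<Rightarrow> nat \<Rightarrow> nat \<Rightarrow> 'a" where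
  "kernel_pow M n 0 x y = (if x = y then 1 else 0)"
| "kernel_pow M n (Suc k) x y = (\<Sum>z<n. kernel_pow M n k x z * M z y)"

lemma kernel_pow_scale: "kernel_pow (\<lambda>i j. c * M i j) n k x y = c ^ k * kernel_pow M n k x y"
  by (induction k arbitrary: y) (auto simp: sum_distrib_left algebra_simps intro!: sum.cong)

lemma kernel_pow_of_real:
  "kernel_pow (\<lambda>i j. of_real (M i j) :: 'a::{real_algebra_1, comm_semiring_1}) n k x y =
   of_real (kernel_pow M n k x y)"
  by (induction k arbitrary: y) auto

lemma kernel_pow_mat:
  assumes x: "x < n" and y: "y < n"
  shows "(kmat n M ^\<^sub>m k) $$ (x, y) = kernel_pow M n k x y"
  using y
proof (induction k arbitrary: y)
  case (Suc k)
  have "(kmat n M ^\<^sub>m Suc k) $$ (x, y) = (\<Sum>z<n. (kmat n M ^\<^sub>m k) $$ (x, z) * kmat n M $$ (z, y))"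
    using x Suc.prems by (simp only: pow_mat.simps) (rule mat_mult_entry, auto)
  thus ?case using Suc by simp
qed (use x in auto)

lemma kernel_pow_Suc_left:
  assumes x: "x < n" and y: "y < n"
  shows "kernel_pow M n (Suc k) x y = (\<Sum>z<n. M x z * kernel_pow M n k z y)"
  using y
proof (induction k arbitrary: y)
  case 0
  thus ?case using x by (simp flip: of_bool_def)
next
  case (Suc k)
  have "kernel_pow M n (Suc (Suc k)) x y = (\<Sum>z<n. (\<Sum>w<n. M x w * kernel_pow M n k w z) * M z y)"
    unfolding kernel_pow.simps(2)[of M n "Suc k"]
    by (intro sum.cong refl) (auto simp: Suc.IH simp del: kernel_pow.simps)
  also have "\<dots> = (\<Sum>w<n. M x w * (\<Sum>z<n. kernel_pow M n k w z * M z y))"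
    by (simp add: sum_distrib_left sum_distrib_right algebra_simps) (rule sum.swap)
  finally show ?case by simp
qed

lemma kernel_pow_one: "x < n \<Longrightarrow> y < n \<Longrightarrow> kernel_pow M n (Suc 0) x y = M x y"
  by (simp flip: of_bool_def)

lemma eigenvalue_smult_mat:
  fixes A :: "'a::comm_ring_1 mat"
  assumes A: "A \<in> carrier_mat n n" and ev: "eigenvalue A \<mu>"
  shows "eigenvalue (c \<cdot>\<^sub>m A) (c * \<mu>)"
proof -
  obtain v where v: "v \<in> carrier_vec n" "v \<noteq> 0\<^sub>v n" and Av: "A *\<^sub>v v = \<mu> \<cdot>\<^sub>v v"
    using ev A unfolding eigenvalue_def eigenvector_def by auto
  have "(c \<cdot>\<^sub>m A) *\<^sub>v v = c \<cdot>\<^sub>v (A *\<^sub>v v)"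
    using A v by (intro eq_vecI) (auto simp: scalar_prod_def sum_distrib_left mult.assoc)
  also have "\<dots> = (c * \<mu>) \<cdot>\<^sub>v v" by (simp add: Av smult_smult_assoc)
  finally show ?thesis
    using A v unfolding eigenvalue_def eigenvector_def by auto
qed

(* This rescales the kernel to
   spectral radius 1 and uses the Jordan normal form bound of the library. *)
lemma kernel_pow_growth:
  fixes M :: "nat \<Rightarrow> nat \<Rightarrow> real"
  assumes n: "n > 0" and r: "r > 0"
    and ev: "\<And>\<mu>. eigenvalue (kmat n (\<lambda>i j. complex_of_real (M i j))) \<mu> \<Longrightarrow> cmod \<mu> \<le> r"
  shows "\<exists>c1 c2. \<forall>k x y. x < n \<longrightarrow> y < n \<longrightarrow>
           \<bar>kernel_pow M n k x y\<bar> \<le> r ^ k * (c1 + c2 * real k ^ (n - 1))"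
proof -
  define B where "B = kmat n (\<lambda>i j. complex_of_real (M i j / r))"
  have B: "B \<in> carrier_mat n n" unfolding B_def by simp
  have scaled: "kmat n (\<lambda>i j. complex_of_real (M i j)) = complex_of_real r \<cdot>\<^sub>m B"
    using r unfolding B_def by (intro eq_matI) auto
  have "cmod \<mu> \<le> 1" if "eigenvalue B \<mu>" for \<mu>
  proof -
    have "r * cmod \<mu> \<le> r"
      using ev[unfolded scaled, OF eigenvalue_smult_mat[OF B that]] r by (simp add: norm_mult)
    thus ?thesis using r by simp
  qed
  hence "spectral_radius B \<le> 1"
    using spectral_radius_mem_max(1)[OF B n] unfolding spectrum_def by auto
  then obtain c1 c2 where bound: "\<And>k. norm_bound (B ^\<^sub>m k) (c1 + c2 * of_nat k ^ (n - 1))"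
    using spectral_radius_jnf_norm_bound_le_1_upper_triangular[OF B] by auto
  show ?thesis
  proof (intro exI allI impI)
    fix k x y assume x: "x < n" and y: "y < n"
    have entry: "(B ^\<^sub>m k) $$ (x, y) = complex_of_real ((1 / r) ^ k * kernel_pow M n k x y)"
      unfolding B_def kernel_pow_mat[OF x y] kernel_pow_of_real
      by (simp add: kernel_pow_scale[symmetric])
    have "cmod ((B ^\<^sub>m k) $$ (x, y)) \<le> c1 + c2 * real k ^ (n - 1)"
      using bound[of k] x y B unfolding norm_bound_def by auto
    hence "(1 / r) ^ k * \<bar>kernel_pow M n k x y\<bar> \<le> c1 + c2 * real k ^ (n - 1)"
      using r unfolding entry norm_of_real by (simp add: abs_mult)
    thus "\<bar>kernel_pow M n k x y\<bar> \<le> r ^ k * (c1 + c2 * real k ^ (n - 1))"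
      using r by (simp add: power_one_over field_simps)
  qed
qed

definition kapply :: "(nat \<Rightarrow> nat \<Rightarrow> real) \<Rightarrow> nat \<Rightarrow> (nat \<Rightarrow> real) \<Rightarrow> nat \<Rightarrow> real" where
  "kapply M n f x = (\<Sum>y<n. M x y * f y)"

definition sqnorm :: "nat \<Rightarrow> (nat \<Rightarrow> real) \<Rightarrow> real" where
  "sqnorm n f = (\<Sum>x<n. (f x)\<^sup>2)"

lemma sqnorm_nonneg: "sqnorm n f \<ge> 0"
  unfolding sqnorm_def by (intro sum_nonneg) auto

lemma sqnorm_cong: "(\<And>x. x < n \<Longrightarrow> f x = g x) \<Longrightarrow> sqnorm n f = sqnorm n g"
  unfolding sqnorm_def by (intro sum.cong) auto

lemma kapply_pow_0: "x < n \<Longrightarrow> kapply (kernel_pow M n 0) n f x = f x"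
  unfolding kapply_def by (simp flip: of_bool_def)

lemma kapply_pow_Suc:
  assumes x: "x < n"
  shows "kapply (kernel_pow M n (Suc k)) n f x = kapply M n (kapply (kernel_pow M n k) n f) x"
proof -
  have "kapply (kernel_pow M n (Suc k)) n f x = (\<Sum>y<n. (\<Sum>z<n. M x z * kernel_pow M n k z y) * f y)"
    unfolding kapply_def using x
    by (intro sum.cong refl) (simp add: kernel_pow_Suc_left del: kernel_pow.simps)
  also have "\<dots> = kapply M n (kapply (kernel_pow M n k) n f) x"
    unfolding kapply_def by (simp add: sum_distrib_left sum_distrib_right algebra_simps) (rule sum.swap)
  finally show ?thesis .
qed

(* For a symmetric kernel S the sequence a_k = |S^k f|^2 is log-convex:
   a_(k+1) = <S^k f, S^(k+2) f>, and Cauchy-Schwarz applies. *)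
lemma symmetric_kernel_log_convex:
  fixes S :: "nat \<Rightarrow> nat \<Rightarrow> real" and f :: "nat \<Rightarrow> real"
  assumes sym: "\<And>i j. i < n \<Longrightarrow> j < n \<Longrightarrow> S i j = S j i"
  defines "h \<equiv> \<lambda>k. kapply (kernel_pow S n k) n f"
  shows "(sqnorm n (h (Suc k)))\<^sup>2 \<le> sqnorm n (h k) * sqnorm n (h (Suc (Suc k)))"
proof -
  have step: "h (Suc j) x = (\<Sum>z<n. S x z * h j z)" if "x < n" for j x
    unfolding h_def by (simp only: kapply_pow_Suc[OF that]) (simp add: kapply_def)
  have "sqnorm n (h (Suc k)) = (\<Sum>x<n. \<Sum>z<n. h (Suc k) x * S x z * h k z)"
    unfolding sqnorm_def power2_eq_square
    by (intro sum.cong refl) (simp add: step sum_distrib_left mult.assoc)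
  also have "\<dots> = (\<Sum>z<n. h k z * h (Suc (Suc k)) z)"
    by (subst sum.swap) (auto simp: step sym sum_distrib_left algebra_simps intro!: sum.cong)
  finally show ?thesis
    using Cauchy_Schwarz_ineq_sum[of "h k" "h (Suc (Suc k))" "{..<n}"] by (simp add: sqnorm_def)
qed

lemma sqnorm_kapply_le:
  assumes bound: "\<And>x y. x < n \<Longrightarrow> y < n \<Longrightarrow> \<bar>M x y\<bar> \<le> b"
  shows "sqnorm n (kapply M n f) \<le> real n ^ 2 * b\<^sup>2 * sqnorm n f"
proof -
  have l1: "(\<Sum>y<n. 1 * \<bar>f y\<bar>)\<^sup>2 \<le> real n * sqnorm n f"
    using Cauchy_Schwarz_ineq_sum[of "\<lambda>_. 1" "\<lambda>y. \<bar>f y\<bar>" "{..<n}"] by (simp add: sqnorm_def)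
  have "(kapply M n f x)\<^sup>2 \<le> b\<^sup>2 * (real n * sqnorm n f)" if x: "x < n" for x
  proof -
    have "\<bar>kapply M n f x\<bar> \<le> (\<Sum>y<n. b * \<bar>f y\<bar>)"
      unfolding kapply_def using x bound
      by (intro order_trans[OF sum_abs] sum_mono) (auto simp: abs_mult intro: mult_right_mono)
    hence "(kapply M n f x)\<^sup>2 \<le> (b * (\<Sum>y<n. 1 * \<bar>f y\<bar>))\<^sup>2"
      by (simp add: sum_distrib_left power_mono flip: abs_le_square_iff)
    also have "\<dots> \<le> b\<^sup>2 * (real n * sqnorm n f)"
      using l1 by (simp add: power_mult_distrib mult_left_mono)
    finally show ?thesis .
  qed
  hence "sqnorm n (kapply M n f) \<le> (\<Sum>x<n. b\<^sup>2 * (real n * sqnorm n f))"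
    unfolding sqnorm_def by (intro sum_mono) auto
  thus ?thesis by (simp add: power2_eq_square mult_ac)
qed

(* For a nonnegative log-convex sequence the ratios a_(k+1)/a_k increase,
   hence a_1^k a_0 <= a_0^k a_k. *)
lemma log_convex_power_bound:
  fixes a :: "nat \<Rightarrow> real"
  assumes nonneg: "\<And>k. a k \<ge> 0" and log_convex: "\<And>k. (a (Suc k))\<^sup>2 \<le> a k * a (Suc (Suc k))"
  shows "a 1 ^ k * a 0 \<le> a 0 ^ k * a k"
proof -
  have ratio: "a 1 * a k \<le> a 0 * a (Suc k)" for k
  proof (induction k)
    case (Suc k)
    show ?case
    proof (cases "a (Suc k) = 0")
      case False
      hence pos: "a (Suc k) > 0" using nonneg[of "Suc k"] by auto
      have "a 1 * (a (Suc k))\<^sup>2 \<le> a 1 * (a k * a (Suc (Suc k)))"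
        by (rule mult_left_mono[OF log_convex nonneg])
      hence "(a 1 * a (Suc k)) * a (Suc k) \<le> (a 1 * a k) * a (Suc (Suc k))"
        by (simp add: power2_eq_square mult_ac)
      also have "\<dots> \<le> (a 0 * a (Suc k)) * a (Suc (Suc k))"
        by (rule mult_right_mono[OF Suc.IH nonneg])
      also have "\<dots> = (a 0 * a (Suc (Suc k))) * a (Suc k)" by (simp only: mult_ac)
      finally show ?thesis using pos by (rule mult_right_le_imp_le)
    qed (simp add: nonneg mult_nonneg_nonneg)
  qed (simp add: mult.commute)
  show ?thesis
  proof (induction k)
    case (Suc k)
    have "a 1 ^ Suc k * a 0 = a 1 * (a 1 ^ k * a 0)" by simp
    also have "\<dots> \<le> a 1 * (a 0 ^ k * a k)" by (rule mult_left_mono[OF Suc.IH nonneg])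
    also have "\<dots> = a 0 ^ k * (a 1 * a k)" by simp
    also have "\<dots> \<le> a 0 ^ k * (a 0 * a (Suc k))"
      by (rule mult_left_mono[OF ratio zero_le_power[OF nonneg]])
    finally show ?case by (simp add: mult_ac)
  qed simp
qed

lemma polynomial_below_exponential:
  "\<theta> > 1 \<Longrightarrow> eventually (\<lambda>k. A * real k ^ p \<le> (\<theta>::real) ^ k) sequentially"
  by real_asymp

lemma power_beats_polynomial_growth:
  fixes r r' c1 c2 :: real
  assumes r': "0 < r'" and lt: "r' < r"
  shows "\<exists>k\<ge>1. C * (r' ^ k * (c1 + c2 * real k ^ m))\<^sup>2 \<le> (r\<^sup>2) ^ k"
proof -
  define \<theta> where "\<theta> = (r / r')\<^sup>2"
  define K where "K = \<bar>C\<bar> * (\<bar>c1\<bar> + \<bar>c2\<bar>)\<^sup>2"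
  have "\<theta> > 1" using r' lt by (simp add: \<theta>_def one_less_power)
  hence "eventually (\<lambda>k. K * real k ^ (2 * m) \<le> \<theta> ^ k) sequentially"
    by (rule polynomial_below_exponential)
  then obtain N where N: "\<And>k. k \<ge> N \<Longrightarrow> K * real k ^ (2 * m) \<le> \<theta> ^ k"
    unfolding eventually_sequentially by blast
  define k where "k = max N 1"
  have k: "k \<ge> 1" "K * real k ^ (2 * m) \<le> \<theta> ^ k" using N[of k] by (auto simp: k_def)
  have km: "1 \<le> real k ^ m" using k(1) by (simp add: one_le_power)
  have "\<bar>c1 + c2 * real k ^ m\<bar> \<le> \<bar>c1\<bar> + \<bar>c2\<bar> * real k ^ m"
    using abs_triangle_ineq[of c1 "c2 * real k ^ m"] by (simp add: abs_mult)
  also have "\<dots> \<le> (\<bar>c1\<bar> + \<bar>c2\<bar>) * real k ^ m"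
    using mult_left_mono[OF km, of "\<bar>c1\<bar>"] by (simp add: distrib_right)
  finally have "(c1 + c2 * real k ^ m)\<^sup>2 \<le> ((\<bar>c1\<bar> + \<bar>c2\<bar>) * real k ^ m)\<^sup>2"
    by (metis abs_ge_zero power2_abs power_mono)
  hence "C * (c1 + c2 * real k ^ m)\<^sup>2 \<le> \<bar>C\<bar> * ((\<bar>c1\<bar> + \<bar>c2\<bar>) * real k ^ m)\<^sup>2"
    by (metis abs_ge_self abs_ge_zero mult_mono zero_le_power2)
  also have "\<dots> = K * real k ^ (2 * m)"
    unfolding K_def by (simp add: power_mult_distrib power_mult mult_ac)
  finally have "C * (c1 + c2 * real k ^ m)\<^sup>2 \<le> K * real k ^ (2 * m)" .
  hence "(r' ^ k)\<^sup>2 * (C * (c1 + c2 * real k ^ m)\<^sup>2) \<le> (r' ^ k)\<^sup>2 * \<theta> ^ k"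
    using k(2) by (intro mult_left_mono) auto
  also have "\<dots> = (r' ^ 2 * \<theta>) ^ k"
    by (metis power_mult power_mult_distrib mult.commute)
  also have "r' ^ 2 * \<theta> = r\<^sup>2"
    using r' by (simp add: \<theta>_def power_divide)
  finally have "(r' ^ k)\<^sup>2 * (C * (c1 + c2 * real k ^ m)\<^sup>2) \<le> (r\<^sup>2) ^ k" .
  moreover have "C * (r' ^ k * (c1 + c2 * real k ^ m))\<^sup>2 = (r' ^ k)\<^sup>2 * (C * (c1 + c2 * real k ^ m)\<^sup>2)"
    by (simp only: power_mult_distrib mult_ac)
  ultimately have "C * (r' ^ k * (c1 + c2 * real k ^ m))\<^sup>2 \<le> (r\<^sup>2) ^ k" by linarith
  thus ?thesis using k(1) by blast
qed

(* Indeed a_1^k a_0 <= a_0^k a_k <= a_0^(k+1) r^(2k) for a suitable k, by the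
   two preceding lemmas; taking k-th roots gives a_1 <= r^2 a_0. *)
lemma symmetric_kernel_contraction:
  fixes S :: "nat \<Rightarrow> nat \<Rightarrow> real"
  assumes sym: "\<And>i j. i < n \<Longrightarrow> j < n \<Longrightarrow> S i j = S j i"
    and growth: "\<And>k x y. x < n \<Longrightarrow> y < n \<Longrightarrow> \<bar>kernel_pow S n k x y\<bar> \<le> r' ^ k * (c1 + c2 * real k ^ m)"
    and r': "0 < r'" "r' < r"
  shows "sqnorm n (kapply S n f) \<le> r\<^sup>2 * sqnorm n f"
proof -
  define a where "a k = sqnorm n (kapply (kernel_pow S n k) n f)" for k
  have a0: "a 0 = sqnorm n f"
    unfolding a_def by (intro sqnorm_cong) (simp add: kapply_pow_0)
  have a1: "a 1 = sqnorm n (kapply S n f)"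
    unfolding a_def kapply_def by (intro sqnorm_cong sum.cong) (auto simp: kernel_pow_one simp del: kernel_pow.simps)
  have a_growth: "a k \<le> real n ^ 2 * (r' ^ k * (c1 + c2 * real k ^ m))\<^sup>2 * a 0" for k
    unfolding a0 unfolding a_def by (rule sqnorm_kapply_le[OF growth])
  obtain k where k: "k \<ge> 1" "real n ^ 2 * (r' ^ k * (c1 + c2 * real k ^ m))\<^sup>2 \<le> (r\<^sup>2) ^ k"
    using power_beats_polynomial_growth[OF r'] by blast
  have a_nonneg: "a j \<ge> 0" for j unfolding a_def by (rule sqnorm_nonneg)
  have "a 1 ^ k * a 0 \<le> a 0 ^ k * a k"
    using a_nonneg by (rule log_convex_power_bound)
      (unfold a_def, rule symmetric_kernel_log_convex[OF sym])
  also have "\<dots> \<le> a 0 ^ k * ((r\<^sup>2) ^ k * a 0)"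
    using order_trans[OF a_growth mult_right_mono[OF k(2) a_nonneg]]
    by (rule mult_left_mono) (simp add: a_nonneg)
  finally have powers: "a 1 ^ k * a 0 \<le> (a 0 * r\<^sup>2) ^ k * a 0"
    by (simp add: power_mult_distrib mult_ac)
  show ?thesis
  proof (cases "a 0 = 0")
    case True
    have "a 1 \<le> 0" using a_growth[of 1] unfolding True by (simp only: mult_zero_right)
    thus ?thesis using True unfolding a0 a1 by (simp only: mult_zero_right)
  next
    case False
    hence pos: "a 0 > 0" using a_nonneg[of 0] by linarith
    obtain k' where k': "k = Suc k'" using k(1) gr0_implies_Suc[of k] by force
    have "a 1 ^ Suc k' \<le> (a 0 * r\<^sup>2) ^ Suc k'"
      unfolding k'[symmetric] by (rule mult_right_le_imp_le[OF powers pos])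
    hence "a 1 \<le> a 0 * r\<^sup>2" by (rule power_le_imp_le_base) (use pos in simp)
    thus ?thesis unfolding a0 a1 by (simp add: mult.commute)
  qed
qed

definition walk_kernel :: "nat \<Rightarrow> (nat \<Rightarrow> nat \<Rightarrow> bool) \<Rightarrow> nat \<Rightarrow> nat \<Rightarrow> real" where
  "walk_kernel d E x y = (if E x y then 1 / real d else 0)"

lemma regular_graph_edge: "regular_graph n d E \<Longrightarrow> E x y \<Longrightarrow> x < n \<and> y < n"
  unfolding regular_graph_def by blast

lemma regular_graph_neighbours:
  assumes "regular_graph n d E" "x < n"
  shows "card {y. E x y} = d" "finite {y. E x y}"
proof -
  show "card {y. E x y} = d" using assms unfolding regular_graph_def by blast
  have "{y. E x y} \<subseteq> {..<n}" using regular_graph_edge[OF assms(1)] by blast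
  thus "finite {y. E x y}" by (rule finite_subset) simp
qed

lemma walk_kernel_sym: "regular_graph n d E \<Longrightarrow> walk_kernel d E x y = walk_kernel d E y x"
  unfolding walk_kernel_def regular_graph_def by auto

lemma walk_kernel_row_sum:
  assumes reg: "regular_graph n d E" and d: "d > 0" and x: "x < n"
  shows "(\<Sum>y<n. walk_kernel d E x y) = 1"
proof -
  have "(\<Sum>y<n. walk_kernel d E x y) = (\<Sum>y\<in>{y \<in> {..<n}. E x y}. 1 / real d)"
    unfolding walk_kernel_def by (rule sum.inter_filter[symmetric]) simp
  also have "{y \<in> {..<n}. E x y} = {y. E x y}"
    using regular_graph_edge[OF reg] by blast
  finally show ?thesis using regular_graph_neighbours[OF reg x] d by simp
qed

(* Removing the stationary part J/n from the transition kernel leaves only the eigenvalue 0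
   (from the ones vector) and the eigenvalues other than 1 of the transition matrix. *)
lemma deflated_walk_spectrum:
  assumes reg: "regular_graph n d E" and d: "d > 0" and n: "n > 0"
    and sb: "spectral_bound (transition_matrix n d E) \<rho>"
    and ev: "eigenvalue (kmat n (\<lambda>i j. complex_of_real (walk_kernel d E i j - 1 / real n))) \<mu>"
  shows "cmod \<mu> \<le> max \<rho> 0"
proof -
  let ?P = "kmat n (\<lambda>i j. complex_of_real (walk_kernel d E i j))"
  let ?S = "kmat n (\<lambda>i j. complex_of_real (walk_kernel d E i j - 1 / real n))"
  have "map_mat complex_of_real (transition_matrix n d E) = ?P"
    by (intro eq_matI) (auto simp: transition_matrix_def walk_kernel_def)
  then obtain q0 where q0: "char_poly ?P = [:-1, 1:] * q0"
    and roots: "\<And>z. poly q0 z = 0 \<Longrightarrow> cmod z \<le> \<rho>"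
    using sb unfolding spectral_bound_def by auto
  have rows: "(\<Sum>k<n. ?P $$ (i, k)) = 1" if "i < n" for i
    using walk_kernel_row_sum[OF reg d that] that by (simp flip: of_real_sum)
  have shift: "?S $$ (i, j) = ?P $$ (i, j) - 1 / of_nat n" if "i < n" "j < n" for i j
    using that by simp
  obtain q where q: "char_poly ?P = [:-1, 1:] * q"
      "char_poly ?S = [:-(1 - of_nat n * (1 / of_nat n)), 1:] * q"
    using char_poly_constant_shift[OF kmat_carrier kmat_carrier n rows shift] by blast
  have "q = q0" using q(1) q0 by (metis mult_cancel_left pCons_eq_0_iff zero_neq_one)
  have "poly (char_poly ?S) \<mu> = 0"
    using ev by (simp only: eigenvalue_root_char_poly[OF kmat_carrier])
  hence "poly ([:0, 1:] * q0) \<mu> = 0"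
    unfolding q(2) \<open>q = q0\<close> using n by simp
  thus ?thesis using roots by fastforce
qed

lemma mean_zero_contraction:
  assumes reg: "regular_graph n d E" and d: "d > 0" and n: "n > 0"
    and sb: "spectral_bound (transition_matrix n d E) \<rho>" and rho: "\<rho> < r" and r: "0 < r"
    and g: "(\<Sum>x<n. g x) = 0"
  shows "sqnorm n (kapply (walk_kernel d E) n g) \<le> r\<^sup>2 * sqnorm n g"
proof -
  define r' where "r' = (max \<rho> 0 + r) / 2"
  have r': "0 < r'" "r' < r" "max \<rho> 0 \<le> r'" using rho r by (auto simp: r'_def)
  define S where "S x y = walk_kernel d E x y - 1 / real n" for x y
  have "cmod \<mu> \<le> r'" if "eigenvalue (kmat n (\<lambda>i j. complex_of_real (S i j))) \<mu>" for \<mu>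
    using deflated_walk_spectrum[OF reg d n sb, of \<mu>] that r'(3) unfolding S_def by linarith
  then obtain c1 c2 where growth: "\<And>k x y. x < n \<Longrightarrow> y < n \<Longrightarrow>
      \<bar>kernel_pow S n k x y\<bar> \<le> r' ^ k * (c1 + c2 * real k ^ (n - 1))"
    using kernel_pow_growth[OF n r'(1)] by blast
  have "sqnorm n (kapply S n g) \<le> r\<^sup>2 * sqnorm n g"
    using walk_kernel_sym[OF reg] by (intro symmetric_kernel_contraction[OF _ growth r'(1,2)]) (simp add: S_def)
  moreover have "kapply S n g x = kapply (walk_kernel d E) n g x" for x
    using g by (simp add: S_def kapply_def left_diff_distrib sum_subtractf flip: sum_divide_distrib)
  ultimately show ?thesis unfolding sqnorm_def by simp
qed

lemma kernel_pow_nonneg: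
  "(\<And>x y. M x y \<ge> (0::real)) \<Longrightarrow> kernel_pow M n k x y \<ge> 0"
  by (induction k arbitrary: y) (auto intro!: sum_nonneg mult_nonneg_nonneg)

lemma geometric_sum_le:
  fixes r :: real
  assumes "0 \<le> r" "r < 1"
  shows "(\<Sum>j<m. r ^ j) \<le> 1 / (1 - r)"
  using assms by (simp add: sum_gp_strict divide_right_mono)

locale expander_walk =
  fixes n d :: nat and E :: "nat \<Rightarrow> nat \<Rightarrow> bool" and r :: real
  assumes reg: "regular_graph n d E" and d: "d > 0" and n: "n > 0"
    and r: "0 \<le> r" "r < 1"
    and contraction: "\<And>g. (\<Sum>x<n. g x) = 0 \<Longrightarrow>
      sqnorm n (kapply (walk_kernel d E) n g) \<le> r\<^sup>2 * sqnorm n g"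
begin

abbreviation P :: "nat \<Rightarrow> nat \<Rightarrow> real" where "P \<equiv> walk_kernel d E"

abbreviation pw :: "nat \<Rightarrow> nat \<Rightarrow> nat \<Rightarrow> real" where "pw j x y \<equiv> kernel_pow P n j x y"

lemma P_nonneg: "P x y \<ge> 0"
  by (simp add: walk_kernel_def)

lemma pw_nonneg: "pw j x y \<ge> 0"
  by (rule kernel_pow_nonneg[OF P_nonneg])

lemma pw_Suc: "x < n \<Longrightarrow> y < n \<Longrightarrow> pw (Suc j) x y = (\<Sum>z<n. P x z * pw j z y)"
  by (rule kernel_pow_Suc_left)

lemma pw_column_sum: "y < n \<Longrightarrow> (\<Sum>x<n. pw j x y) = 1"
proof (induction j)
  case (Suc j)
  have "(\<Sum>x<n. pw (Suc j) x y) = (\<Sum>x<n. \<Sum>z<n. P x z * pw j z y)"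
    using Suc.prems by (intro sum.cong) (simp_all add: pw_Suc del: kernel_pow.simps)
  also have "\<dots> = (\<Sum>z<n. (\<Sum>x<n. P x z) * pw j z y)"
    by (simp add: sum_distrib_right) (rule sum.swap)
  also have "\<dots> = (\<Sum>z<n. pw j z y)"
    using walk_kernel_sym[OF reg] walk_kernel_row_sum[OF reg d] by (intro sum.cong) auto
  finally show ?case using Suc by simp
qed simp

(* Mixing: P^j(x, y) is within r^j of the uniform value 1/n, because the column
   P^j(., y) - 1/n has mean zero and squared norm at most r^(2j). *)
lemma pw_mixing:
  assumes x: "x < n" and y: "y < n"
  shows "\<bar>pw j x y - 1 / real n\<bar> \<le> r ^ j"
proof -
  define g where "g j x = pw j x y - 1 / real n" for j x
  have mean_zero: "(\<Sum>x<n. g j x) = 0" for j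
    using n by (simp add: g_def sum_subtractf pw_column_sum[OF y])
  have step: "g (Suc j) x = kapply P n (g j) x" if "x < n" for j x
    using that y by (simp add: g_def kapply_def kernel_pow_Suc_left right_diff_distrib sum_subtractf
        walk_kernel_row_sum[OF reg d] flip: sum_divide_distrib del: kernel_pow.simps)
  have "sqnorm n (g j) \<le> (r ^ j)\<^sup>2" for j
  proof (induction j)
    case 0
    have "sqnorm n (g 0) = (\<Sum>x<n. (if x = y then 1 - 2 / real n else 0) + 1 / (real n)\<^sup>2)"
      unfolding sqnorm_def g_def by (intro sum.cong) (auto simp: power2_eq_square field_simps)
    also have "\<dots> = 1 - 1 / real n" using y n by (simp add: sum.distrib power2_eq_square)
    finally show ?case by simp
  next
    case (Suc j)
    have "sqnorm n (g (Suc j)) = sqnorm n (kapply P n (g j))" by (intro sqnorm_cong step)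
    also have "\<dots> \<le> r\<^sup>2 * sqnorm n (g j)" by (rule contraction[OF mean_zero])
    also have "\<dots> \<le> (r ^ Suc j)\<^sup>2" using Suc by (simp add: power_mult_distrib mult_left_mono)
    finally show ?case .
  qed
  moreover have "(g j x)\<^sup>2 \<le> sqnorm n (g j)"
    unfolding sqnorm_def using x by (intro member_le_sum) auto
  ultimately have "(g j x)\<^sup>2 \<le> (r ^ j)\<^sup>2" by (meson order_trans)
  hence "\<bar>g j x\<bar> \<le> \<bar>r ^ j\<bar>" by (simp only: abs_le_square_iff)
  thus ?thesis using r unfolding g_def by simp
qed

lemma pw_bounds:
  assumes "x < n" "y < n"
  shows "pw j x y \<le> 1 / real n + r ^ j" "1 / real n - r ^ j \<le> pw j x y"
  using pw_mixing[OF assms, of j] unfolding abs_le_iff by linarith+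

end

lemma exp_average_le:
  fixes w t :: "'a \<Rightarrow> real"
  assumes "finite S" "S \<noteq> {}" "\<And>i. i \<in> S \<Longrightarrow> w i \<ge> 0" "(\<Sum>i\<in>S. w i) = 1"
  shows "exp (\<Sum>i\<in>S. w i * t i) \<le> (\<Sum>i\<in>S. w i * exp (t i))"
  using convex_on_sum[OF assms(1,2) exp_convex assms(4,3)] by simp

lemma convolution_sum:
  fixes k w :: "nat \<Rightarrow> real"
  shows "(\<Sum>j<N. \<Sum>i<j. k i * w (j - i)) = (\<Sum>i<N. k i * (\<Sum>m\<in>{1..<N - i}. w m))"
proof (induction N)
  case (Suc N)
  have "(\<Sum>m\<in>{1..<Suc N - i}. w m) = (\<Sum>m\<in>{1..<N - i}. w m) + w (N - i)" if "i < N" for i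
    using that by (simp add: Suc_diff_le)
  hence "(\<Sum>i<N. k i * (\<Sum>m\<in>{1..<Suc N - i}. w m)) =
      (\<Sum>i<N. k i * (\<Sum>m\<in>{1..<N - i}. w m)) + (\<Sum>i<N. k i * w (N - i))"
    by (simp add: distrib_left sum.distrib)
  thus ?case using Suc by simp
qed simp

(* The graph G: a new vertex n is attached to v.  The walk on G moves like the walk on G_n,
   except that at v it steps to the pendant vertex with probability 1 - stay = 1/(d+1). *)
locale pendant_walk = expander_walk +
  fixes v :: nat
  assumes v: "v < n"
begin

abbreviation avoid :: "nat \<Rightarrow> nat \<Rightarrow> real" where
  "avoid k x \<equiv> srw_avoid {..n} (add_pendant E v n) n k x"

definition stay :: real where "stay = real d / (real d + 1)"

(* weight x is the probability that the walk on G at x does not step to the pendant vertex. *)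
definition weight :: "nat \<Rightarrow> real" where "weight x = (if x = v then stay else 1)"

lemma stay_bounds: "0 < stay" "stay < 1"
  using d by (auto simp: stay_def)

lemma one_minus_stay: "1 - stay = 1 / (real d + 1)"
  by (simp add: stay_def field_simps)

lemma pendant_degree:
  assumes x: "x < n"
  shows "card {z \<in> {..n}. add_pendant E v n x z} = d + (if x = v then 1 else 0)"
proof -
  have "{z \<in> {..n}. add_pendant E v n x z} = {z. E x z} \<union> (if x = v then {n} else {})"
    using x by (auto simp: add_pendant_def dest: regular_graph_edge[OF reg])
  moreover have "n \<notin> {z. E x z}" using regular_graph_edge[OF reg] by blast
  ultimately show ?thesis using regular_graph_neighbours[OF reg x] by auto
qed

lemma pendant_step:
  assumes "x < n" "y < n"
  shows "srw_step {..n} (add_pendant E v n) x y = weight x * P x y"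
proof -
  have "add_pendant E v n x y = E x y" using assms by (simp add: add_pendant_def)
  thus ?thesis
    using assms d unfolding srw_step_def pendant_degree[OF assms(1)]
    by (simp add: weight_def stay_def walk_kernel_def)
qed

lemma avoid_Suc:
  assumes x: "x < n"
  shows "avoid (Suc k) x = weight x * (\<Sum>y<n. P x y * avoid k y)"
proof -
  have "avoid (Suc k) x =
      (\<Sum>y\<in>insert n {..<n}. srw_step {..n} (add_pendant E v n) x y * (if y = n then 0 else avoid k y))"
    by (simp add: lessThan_Suc_atMost[symmetric] lessThan_Suc)
  also have "\<dots> = (\<Sum>y<n. weight x * (P x y * avoid k y))"
    using x by (simp add: pendant_step mult.assoc)
  finally show ?thesis by (simp add: sum_distrib_left)
qed

lemma expected_visits_le:
  assumes t: "t \<le> n" and x: "x < n" and y: "y < n"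
  shows "(\<Sum>j<t. pw j x y) \<le> 1 + 1 / (1 - r)"
proof -
  have "(\<Sum>j<t. pw j x y) \<le> (\<Sum>j<t. 1 / real n + r ^ j)"
    using pw_bounds[OF x y] by (intro sum_mono) blast
  also have "\<dots> = real t / real n + (\<Sum>j<t. r ^ j)" by (simp add: sum.distrib)
  also have "\<dots> \<le> 1 + 1 / (1 - r)"
    using t n geometric_sum_le[OF r] by (intro add_mono) simp_all
  finally show ?thesis .
qed

(* Each visit to v costs a factor stay; by Jensen's inequality the probability of avoiding
   the pendant vertex is at least stay raised to the expected number of visits to v. *)
lemma avoid_ge_stay_power_visits:
  "x < n \<Longrightarrow> avoid k x \<ge> stay powr (\<Sum>j<k. pw j x v)"
proof (induction k arbitrary: x)
  case (Suc k)
  define \<phi> where "\<phi> y = (\<Sum>j<k. pw j y v)" for y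
  have "(\<Sum>j<Suc k. pw j x v) = pw 0 x v + (\<Sum>j<k. pw (Suc j) x v)"
    by (rule sum.lessThan_Suc_shift)
  also have "(\<Sum>j<k. pw (Suc j) x v) = (\<Sum>j<k. \<Sum>y<n. P x y * pw j y v)"
    using Suc.prems v by (simp add: kernel_pow_Suc_left del: kernel_pow.simps)
  also have "\<dots> = (\<Sum>y<n. P x y * \<phi> y)"
    unfolding \<phi>_def by (simp add: sum_distrib_left) (rule sum.swap)
  finally have visits: "(\<Sum>j<Suc k. pw j x v) = (if x = v then 1 else 0) + (\<Sum>y<n. P x y * \<phi> y)"
    by simp
  have "stay powr (\<Sum>y<n. P x y * \<phi> y) = exp (\<Sum>y<n. P x y * (\<phi> y * ln stay))"
    using stay_bounds by (simp add: powr_def sum_distrib_left sum_distrib_right mult_ac)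
  also have "\<dots> \<le> (\<Sum>y<n. P x y * stay powr \<phi> y)"
    using exp_average_le[of "{..<n}" "P x" "\<lambda>y. \<phi> y * ln stay"] n P_nonneg walk_kernel_row_sum[OF reg d Suc.prems]
      stay_bounds by (auto simp: powr_def mult_ac)
  also have "\<dots> \<le> (\<Sum>y<n. P x y * avoid k y)"
    using Suc.IH P_nonneg by (intro sum_mono mult_left_mono) (auto simp: \<phi>_def)
  finally have step: "weight x * stay powr (\<Sum>y<n. P x y * \<phi> y) \<le> avoid (Suc k) x"
    unfolding avoid_Suc[OF Suc.prems]
    by (rule mult_left_mono) (use stay_bounds in \<open>simp add: weight_def\<close>)
  have "stay powr (\<Sum>j<Suc k. pw j x v) = weight x * stay powr (\<Sum>y<n. P x y * \<phi> y)"
    unfolding visits powr_add using stay_bounds by (simp add: weight_def)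
  thus ?case using step by linarith
qed simp

lemma avoid_lower_bound:
  assumes u: "u < n" and K: "K \<le> n"
  shows "avoid K u \<ge> stay powr (1 + 1 / (1 - r))"
proof -
  have "stay powr (1 + 1 / (1 - r)) \<le> stay powr (\<Sum>j<K. pw j u v)"
    by (rule powr_mono'[OF expected_visits_le[OF K u v]]) (use stay_bounds in auto)
  also have "\<dots> \<le> avoid K u" by (rule avoid_ge_stay_power_visits[OF u])
  finally show ?thesis .
qed

(* The walk on G_n killed when it steps to the pendant vertex; survive j x is the
   probability that the walk started at x is at v at time j without having been killed. *)
definition killed :: "nat \<Rightarrow> nat \<Rightarrow> real" where "killed x y = weight x * P x y"

abbreviation survive :: "nat \<Rightarrow> nat \<Rightarrow> real" where "survive j x \<equiv> kernel_pow killed n j x v"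

lemma survive_nonneg: "survive j x \<ge> 0"
  using stay_bounds P_nonneg
  by (intro kernel_pow_nonneg) (simp add: killed_def weight_def)

lemma survive_Suc:
  assumes x: "x < n"
  shows "survive (Suc j) x = weight x * (\<Sum>y<n. P x y * survive j y)"
proof -
  have "survive (Suc j) x = (\<Sum>y<n. killed x y * survive j y)" by (rule kernel_pow_Suc_left[OF x v])
  thus ?thesis by (simp add: killed_def sum_distrib_left mult.assoc)
qed

lemma weight_eq: "x < n \<Longrightarrow> weight x = 1 - (1 - stay) * survive 0 x"
  by (simp add: weight_def)

(* The walk is killed only from v, so the hitting probability equals (1 - stay) times the
   expected number of surviving visits to v. *)
lemma avoid_survival: "x < n \<Longrightarrow> avoid k x = 1 - (1 - stay) * (\<Sum>j<k. survive j x)"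
proof (induction k arbitrary: x)
  case (Suc k)
  let ?c = "1 - stay"
  have swap: "(\<Sum>y<n. P x y * (\<Sum>j<k. survive j y)) = (\<Sum>j<k. \<Sum>y<n. P x y * survive j y)"
    by (simp add: sum_distrib_left) (rule sum.swap)
  have "avoid (Suc k) x = weight x * (\<Sum>y<n. P x y * (1 - ?c * (\<Sum>j<k. survive j y)))"
    unfolding avoid_Suc[OF Suc.prems] by (auto simp: Suc.IH intro!: sum.cong)
  also have "\<dots> = weight x * (1 - ?c * (\<Sum>j<k. \<Sum>y<n. P x y * survive j y))"
    using walk_kernel_row_sum[OF reg d Suc.prems]
    by (simp add: right_diff_distrib sum_subtractf mult.left_commute swap flip: sum_distrib_left)
  also have "\<dots> = weight x - ?c * (\<Sum>j<k. survive (Suc j) x)"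
    using Suc.prems by (simp add: survive_Suc right_diff_distrib sum_distrib_left mult.left_commute
        del: kernel_pow.simps)
  also have "\<dots> = 1 - ?c * (survive 0 x + (\<Sum>j<k. survive (Suc j) x))"
    using Suc.prems by (simp add: weight_eq algebra_simps del: kernel_pow.simps(2))
  also have "survive 0 x + (\<Sum>j<k. survive (Suc j) x) = (\<Sum>j<Suc k. survive j x)"
    by (rule sum.lessThan_Suc_shift[symmetric])
  finally show ?case .
qed simp

(* Renewal decomposition by the killing time: a path of the unkilled walk to v either
   survives, or is killed at some visit to v at time i and then returns to v in j - i steps. *)
lemma renewal:
  "x < n \<Longrightarrow> pw j x v - survive j x = (1 - stay) * (\<Sum>i<j. survive i x * pw (j - i) v v)"
proof (induction j arbitrary: x)
  case (Suc j)
  note x = Suc.prems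
  let ?c = "1 - stay"
  have "pw (Suc j) x v - survive (Suc j) x =
      weight x * (\<Sum>y<n. P x y * (pw j y v - survive j y)) + (1 - weight x) * (\<Sum>y<n. P x y * pw j y v)"
    using x by (simp add: pw_Suc[OF x v] survive_Suc algebra_simps sum_subtractf del: kernel_pow.simps)
  also have "(\<Sum>y<n. P x y * (pw j y v - survive j y)) =
      (\<Sum>y<n. P x y * (?c * (\<Sum>i<j. survive i y * pw (j - i) v v)))"
    by (intro sum.cong) (auto simp: Suc.IH)
  also have "\<dots> = ?c * (\<Sum>i<j. (\<Sum>y<n. P x y * survive i y) * pw (j - i) v v)"
    by (simp add: sum_distrib_left sum_distrib_right mult_ac) (rule sum.swap)
  also have "weight x * \<dots> = ?c * (\<Sum>i<j. survive (Suc i) x * pw (Suc j - Suc i) v v)"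
    using x by (simp add: survive_Suc sum_distrib_left mult_ac del: kernel_pow.simps)
  also have "(1 - weight x) * (\<Sum>y<n. P x y * pw j y v) = ?c * (survive 0 x * pw (Suc j - 0) v v)"
    using v by (simp add: weight_def pw_Suc del: kernel_pow.simps(2))
  also have "?c * (\<Sum>i<j. survive (Suc i) x * pw (Suc j - Suc i) v v) + ?c * (survive 0 x * pw (Suc j - 0) v v)
      = ?c * (\<Sum>i<Suc j. survive i x * pw (Suc j - i) v v)"
    unfolding sum.lessThan_Suc_shift[of "\<lambda>i. survive i x * pw (Suc j - i) v v"]
    by (simp only: distrib_left add.commute)
  finally show ?case .
qed simp

(* The expected number of visits to v within n steps is at least 1/2, since after the
   mixing time T the walk is at v with probability close to 1/n. *)
lemma visits_lower_bound:
  assumes u: "u < n" and T: "4 * T \<le> n" and rT: "r ^ T \<le> (1 - r) / 4"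
  shows "(\<Sum>j<n. pw j u v) \<ge> 1 / 2"
proof -
  have Tn: "T \<le> n" using T by simp
  have split: "(\<Sum>j<n. f j) = (\<Sum>j<T. f j) + (\<Sum>j\<in>{T..<n}. f j)" for f :: "nat \<Rightarrow> real"
    using sum.atLeastLessThan_concat[of 0 T n f] Tn by (simp add: lessThan_atLeast0)
  have "(\<Sum>j\<in>{T..<n}. r ^ j) = (r ^ T - r ^ n) / (1 - r)"
    using split[of "\<lambda>j. r ^ j"] r by (simp add: sum_gp_strict diff_divide_distrib)
  also have "\<dots> \<le> r ^ T / (1 - r)" using r by (intro divide_right_mono) auto
  also have "\<dots> \<le> 1 / 4" using rT r by (simp add: field_simps)
  finally have tail: "(\<Sum>j\<in>{T..<n}. r ^ j) \<le> 1 / 4" .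
  have "3 / 4 \<le> real (n - T) / real n" using T n by (simp add: field_simps of_nat_diff[OF Tn])
  moreover have "(\<Sum>j\<in>{T..<n}. 1 / real n - r ^ j) = real (n - T) / real n - (\<Sum>j\<in>{T..<n}. r ^ j)"
    by (simp add: sum_subtractf)
  ultimately have "1 / 2 \<le> (\<Sum>j\<in>{T..<n}. 1 / real n - r ^ j)" using tail by linarith
  also have "\<dots> \<le> (\<Sum>j\<in>{T..<n}. pw j u v)"
    using pw_bounds(2)[OF u v] by (intro sum_mono) auto
  also have "\<dots> \<le> (\<Sum>j<n. pw j u v)"
    using split[of "\<lambda>j. pw j u v"] pw_nonneg by (simp add: sum_nonneg)
  finally show ?thesis .
qed

(* Second bound of the theorem: by the renewal identity the unkilled visits B and the
   surviving visits A satisfy B - A <= (1 - stay) A W, so A >= 1/(2 (1 + (1 - stay) W)). *)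
lemma hit_lower_bound:
  assumes u: "u < n" and T: "4 * T \<le> n" and rT: "r ^ T \<le> (1 - r) / 4"
  shows "1 - avoid n u \<ge> (1 - stay) / (2 * (1 + (1 - stay) * (1 + 1 / (1 - r))))"
proof -
  define c where "c = 1 - stay"
  define W where "W = 1 + 1 / (1 - r)"
  define A where "A = (\<Sum>j<n. survive j u)"
  have c: "c > 0" and W: "W \<ge> 0" and A: "A \<ge> 0"
    using stay_bounds r by (auto simp: c_def W_def A_def intro: sum_nonneg survive_nonneg)
  have "(\<Sum>j<n. pw j u v) - A = c * (\<Sum>j<n. \<Sum>i<j. survive i u * pw (j - i) v v)"
    using renewal[OF u] by (simp add: A_def c_def sum_distrib_left flip: sum_subtractf)
  also have "\<dots> = c * (\<Sum>i<n. survive i u * (\<Sum>m\<in>{1..<n - i}. pw m v v))"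
    using convolution_sum[of "\<lambda>i. survive i u" "\<lambda>m. pw m v v" n] by simp
  also have "\<dots> \<le> c * (\<Sum>i<n. survive i u * W)"
  proof (rule mult_left_mono[OF sum_mono])
    fix i assume "i \<in> {..<n}"
    have "(\<Sum>m\<in>{1..<n - i}. pw m v v) \<le> (\<Sum>m<n - i. pw m v v)"
      using pw_nonneg by (intro sum_mono2) auto
    also have "\<dots> \<le> W" unfolding W_def by (rule expected_visits_le[OF _ v v]) simp
    finally show "survive i u * (\<Sum>m\<in>{1..<n - i}. pw m v v) \<le> survive i u * W"
      by (rule mult_left_mono[OF _ survive_nonneg])
  qed (use c in simp)
  also have "(\<Sum>i<n. survive i u * W) = A * W" by (simp add: A_def sum_distrib_right)
  finally have "(\<Sum>j<n. pw j u v) - A \<le> c * (A * W)" .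
  moreover have "A * (1 + c * W) = A + c * (A * W)" by (simp add: algebra_simps)
  ultimately have "1 / 2 \<le> A * (1 + c * W)" using visits_lower_bound[OF u T rT] by linarith
  moreover have D: "2 * (1 + c * W) > 0" using c W by (simp add: add_pos_nonneg)
  ultimately have "1 / (2 * (1 + c * W)) \<le> A" by (simp add: pos_divide_le_eq mult_ac)
  hence "c / (2 * (1 + c * W)) \<le> c * A"
    using mult_left_mono[of "1 / (2 * (1 + c * W))" A c] c by simp
  thus ?thesis by (simp add: avoid_survival[OF u] A_def c_def W_def)
qed

end

lemma pendant_walk_bounds:
  assumes reg: "regular_graph n d E" and d: "d > 0" and v: "v < n" and u: "u < n"
    and sb: "spectral_bound (transition_matrix n d E) \<rho>" and r: "\<rho> < r" "0 < r" "r < 1"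
  shows "K \<le> n \<Longrightarrow> srw_avoid {..n} (add_pendant E v n) n K u \<ge>
           (real d / (real d + 1)) powr (1 + 1 / (1 - r))"
    and "4 * T \<le> n \<Longrightarrow> r ^ T \<le> (1 - r) / 4 \<Longrightarrow> 1 - srw_avoid {..n} (add_pendant E v n) n n u \<ge>
           1 / (real d + 1) / (2 * (1 + 1 / (real d + 1) * (1 + 1 / (1 - r))))"
proof -
  have n: "n > 0" using v by simp
  interpret pendant_walk n d E r v
    by unfold_locales (use reg d n v r mean_zero_contraction[OF reg d n sb r(1,2)] in auto)
  show "K \<le> n \<Longrightarrow> srw_avoid {..n} (add_pendant E v n) n K u \<ge>
      (real d / (real d + 1)) powr (1 + 1 / (1 - r))"
    using avoid_lower_bound[OF u] unfolding stay_def .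
  show "4 * T \<le> n \<Longrightarrow> r ^ T \<le> (1 - r) / 4 \<Longrightarrow> 1 - srw_avoid {..n} (add_pendant E v n) n n u \<ge>
      1 / (real d + 1) / (2 * (1 + 1 / (real d + 1) * (1 + 1 / (1 - r))))"
    using hit_lower_bound[OF u] unfolding one_minus_stay .
qed

(* The theorem: choose r strictly between rho and 1, a mixing time T with r^T <= (1 - r)/4,
   and delta the smaller of the two bounds above; then every n >= 4 T + 1 works. *)
theorem lemma3p1:
  fixes d :: nat and rho :: real
  assumes "d \<ge> 3" and "rho < 1"
  shows "\<exists>\<delta>>0. \<exists>N. \<forall>n\<ge>N. \<forall>E v u.
           regular_graph n d E \<and> spectral_bound (transition_matrix n d E) rho \<and>
           v < n \<and> u \<le> n \<and> u \<noteq> n \<longrightarrow>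
             hit_time_ge_prob {..n} (add_pendant E v n) n (\<delta> * real n) u \<ge> \<delta> \<and>
             hit_time_le_prob {..n} (add_pendant E v n) n n u \<ge> \<delta>"
proof -
  define r where "r = (1 + max rho 0) / 2"
  have r: "rho < r" "0 < r" "r < 1" using assms(2) by (auto simp: r_def)
  define W where "W = 1 + 1 / (1 - r)"
  define \<delta> where "\<delta> = min ((real d / (real d + 1)) powr W) (1 / (real d + 1) / (2 * (1 + 1 / (real d + 1) * W)))"
  have d: "d > 0" using assms(1) by simp
  have W: "W > 0" using r unfolding W_def by (intro add_pos_pos) simp_all
  have \<delta>: "\<delta> > 0" "\<delta> \<le> 1"
    using assms(1) W by (auto simp: \<delta>_def min_le_iff_disj field_simps)
  obtain T where T: "r ^ T \<le> (1 - r) / 4"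
    using real_arch_pow_inv[of "(1 - r) / 4" r] r by (auto intro: less_imp_le)
  show ?thesis
  proof (intro exI[of _ \<delta>] conjI \<delta>(1) exI[of _ "4 * T + 1"] allI impI)
    fix n E v u
    assume "4 * T + 1 \<le> n" and H: "regular_graph n d E \<and> spectral_bound (transition_matrix n d E) rho \<and>
      v < n \<and> u \<le> n \<and> u \<noteq> n"
    hence nT: "4 * T \<le> n" and u: "u < n" and reg: "regular_graph n d E" and v: "v < n"
      and sb: "spectral_bound (transition_matrix n d E) rho" by auto
    note bounds = pendant_walk_bounds[OF reg d v u sb r, folded W_def]
    have "\<delta> * real n \<le> real n" using \<delta> by (intro mult_left_le_one_le) auto
    hence "\<lceil>\<delta> * real n\<rceil> \<le> int n" by (simp add: ceiling_le_iff)
    hence "nat \<lceil>\<delta> * real n\<rceil> - 1 \<le> n" by linarith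
    from bounds(1)[OF this] show "hit_time_ge_prob {..n} (add_pendant E v n) n (\<delta> * real n) u \<ge> \<delta>"
      unfolding hit_time_ge_prob_def \<delta>_def by linarith
    from bounds(2)[OF nT T] show "hit_time_le_prob {..n} (add_pendant E v n) n n u \<ge> \<delta>"
      unfolding hit_time_le_prob_def \<delta>_def by linarith
  qed
qed

end
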